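(* For integers $m,l\ge0$ let $B_{ml}=ML^{m+1}\hat L^{-l}+(-1)^{l+m}\hat L^{-l}L^mML$ and $\hat B_{ml}=L^m\hat L^{-l+1}\hat M+(-1)^{l+m}\hat L\hat M\hat L^{-l}L^m$. Then $$B_{ml}^*=-DB_{ml}D^{-1},\qquad \hat B_{ml}^*=-D\hat B_{ml}D^{-1}.$$
   Context: $D=d/dx$; pseudo-differential operators multiply via $D^i f=\sum_{r\ge0}\binom{i}{r}D^r(f)D^{i-r}$; for $A=\sum_if_iD^i$, $A^*=\sum_i(-D)^if_i$. Two-component BKP hierarchy: dressing operators $\Phi=1+\sum_{i\ge1}a_iD^{-i}$, $\hat\Phi=1+\sum_{i\ge1}b_iD^i$ depending on $t=(t_1,t_3,\dots)$, $\hat t=(\hat t_1,\hat t_3,\dots)$, $t_1=x$, with $\Phi^*=D\Phi^{-1}D^{-1}$, $\hat\Phi^*=D\hat\Phi^{-1}D^{-1}$; Lax operators $L=\Phi D\Phi^{-1}$, $\hat L=\hat\Phi D^{-1}\hat\Phi^{-1}$ (so $L^*=-DLD^{-1}$, $\hat L^*=-D\hat LD^{-1}$); Orlov–Schulman operators $M=\Phi\Gamma\Phi^{-1}$, $\hat M=\hat\Phi\hat\Gamma\hat\Phi^{-1}$ with $\Gamma=\sum_{k\ \mathrm{odd}}kt_kD^{k-1}$, $\hat\Gamma=x+\sum_{k\ \mathrm{odd}}k\hat t_kD^{-k-1}$. *)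

theory Defs
  imports Main
begin

text \<open>Operators live in an associative unital ring 'a; adj is the formal adjoint A \<mapsto> A^*,
  an additive, order-reversing involution. D, Di are D and D^{-1}; x is multiplication
  by x (so D x - x D = 1 and x^* = x).\<close>

definition anti_involution :: "('a::ring_1 \<Rightarrow> 'a) \<Rightarrow> bool" where
  "anti_involution adj \<longleftrightarrow>
     (\<forall>a b. adj (a + b) = adj a + adj b) \<and>
     (\<forall>a b. adj (a * b) = adj b * adj a) \<and>
     (\<forall>a. adj (adj a) = a) \<and> adj 1 = 1"

text \<open>Standing data of the two-component BKP hierarchy:
  Phi, Phii = Phi^{-1}; Phih, Phihi = hat Phi^{-1};
  T = sum over odd k>=3 of k t_k D^{k-1} (t_k independent of x, so T commutes with D,
  and T^* = T since k-1 is even), so Gamma = x + T;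
  Th = sum over odd k of k hat t_k D^{-k-1} (commutes with D, Th^* = Th), so hat Gamma = x + Th.\<close>

definition bkp2_data ::
  "('a::ring_1 \<Rightarrow> 'a) \<Rightarrow> 'a \<Rightarrow> 'a \<Rightarrow> 'a \<Rightarrow> 'a \<Rightarrow> 'a \<Rightarrow> 'a \<Rightarrow> 'a \<Rightarrow> 'a \<Rightarrow> 'a \<Rightarrow> bool" where
  "bkp2_data adj D Di x Phi Phii Phih Phihi T Th \<longleftrightarrow>
     anti_involution adj \<and>
     D * Di = 1 \<and> Di * D = 1 \<and> adj D = - D \<and>
     D * x - x * D = 1 \<and> adj x = x \<and>
     Phi * Phii = 1 \<and> Phii * Phi = 1 \<and> Phih * Phihi = 1 \<and> Phihi * Phih = 1 \<and>
     adj Phi = D * Phii * Di \<and> adj Phih = D * Phihi * Di \<and>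
     D * T = T * D \<and> adj T = T \<and> D * Th = Th * D \<and> adj Th = Th"

definition LaxL :: "'a::ring_1 \<Rightarrow> 'a \<Rightarrow> 'a \<Rightarrow> 'a" where
  "LaxL D Phi Phii = Phi * D * Phii"

definition LaxLh :: "'a::ring_1 \<Rightarrow> 'a \<Rightarrow> 'a \<Rightarrow> 'a" where
  "LaxLh Di Phih Phihi = Phih * Di * Phihi"

text \<open>Integer powers of hat L; hat L^{-1} = hat Phi D hat Phi^{-1}.\<close>
definition LaxLh_pow :: "'a::ring_1 \<Rightarrow> 'a \<Rightarrow> 'a \<Rightarrow> 'a \<Rightarrow> int \<Rightarrow> 'a" where
  "LaxLh_pow D Di Phih Phihi k =
     (if 0 \<le> k then (Phih * Di * Phihi) ^ nat k else (Phih * D * Phihi) ^ nat (- k))"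

definition OSM :: "'a::ring_1 \<Rightarrow> 'a \<Rightarrow> 'a \<Rightarrow> 'a \<Rightarrow> 'a" where
  "OSM x T Phi Phii = Phi * (x + T) * Phii"

definition OSMh :: "'a::ring_1 \<Rightarrow> 'a \<Rightarrow> 'a \<Rightarrow> 'a \<Rightarrow> 'a" where
  "OSMh x Th Phih Phihi = Phih * (x + Th) * Phihi"

end

theory Submission
  imports Defs
begin

text \<open>Twisting the formal adjoint by D, that is A \<mapsto> D^-1 A^* D, gives again an additive,
  order-reversing involution, and the claim says precisely that B and hat B are skew for it.
  The constraint on the dressing operators says that the twisted adjoint maps Phi to Phi^-1, so
  it acts on dressed operators through the undressed ones: L, hat L and hat L^-1 are skew, while
  M \<mapsto> M - L^-1 and hat M \<mapsto> hat M - hat L, because D^-1 x D = x - D^-1. With the canonical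
  relations [L, M] = 1 and [hat L, hat M] = - hat L^2 these shifts turn each of the two summands
  of B (and of hat B) into minus the other one; the sign (-1)^(l+m) is what makes the exchange work.\<close>

locale anti_involutive =
  fixes adj :: "'a::ring_1 \<Rightarrow> 'a"
  assumes anti_involution: "anti_involution adj"
begin

lemma adj_add: "adj (a + b) = adj a + adj b"
  and adj_mult: "adj (a * b) = adj b * adj a"
  and adj_adj: "adj (adj a) = a"
  and adj_one: "adj 1 = 1"
  using anti_involution unfolding anti_involution_def by blast+

lemma adj_zero: "adj 0 = 0"
  using adj_add[of 0 0] by simp

lemma adj_uminus: "adj (- a) = - adj a"
  by (metis adj_add adj_zero add.right_inverse add.inverse_unique)

lemma adj_power: "adj (a ^ n) = adj a ^ n"
  by (induction n) (simp_all add: adj_one adj_mult, metis power_commutes)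

lemma adj_minus_one_power: "adj ((- 1) ^ n) = (- 1) ^ n"
  by (simp add: adj_power adj_uminus adj_one)

lemma adj_power_skew: "adj a = - a \<Longrightarrow> adj (a ^ n) = (- 1) ^ n * a ^ n"
  by (simp add: adj_power power_minus')

lemma adj_right_inverse_skew:
  assumes D_Di: "D * Di = 1" and adj_D: "adj D = - D"
  shows "adj Di = - Di"
proof -
  have "adj Di * D = - 1"
    using adj_mult[of D Di] by (simp add: D_Di adj_one adj_D minus_equation_iff)
  then have "adj Di * (D * Di) = - Di"
    by (metis minus_mult_left mult.assoc mult_1_left)
  then show ?thesis
    by (simp add: D_Di)
qed

lemma anti_involutive_twisted:
  assumes D_Di: "D * Di = 1" and Di_D: "Di * D = 1" and adj_D: "adj D = - D"
  shows "anti_involutive (\<lambda>A. Di * adj A * D)"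
proof -
  have adj_Di: "adj Di = - Di"
    using D_Di adj_D by (rule adj_right_inverse_skew)
  have cancel: "Di * (D * a) = a" "D * (Di * a) = a" for a
    by (simp_all flip: mult.assoc add: D_Di Di_D)
  show ?thesis
    by unfold_locales
      (simp add: anti_involution_def adj_add adj_mult adj_adj adj_one adj_D adj_Di
         distrib_left distrib_right mult.assoc cancel Di_D)
qed

lemma adj_conjugate: "adj U = V \<Longrightarrow> adj (U * A * V) = U * adj A * V"
  by (metis adj_adj adj_mult mult.assoc)

lemma adj_B_skew:
  fixes m :: nat
  assumes adj_L: "adj L = - L" and adj_M: "adj M = M - Li" and L_Li: "L * Li = 1"
    and comm: "L * M - M * L = 1" and adj_P: "adj P = (- 1) ^ l * P"
  defines "B \<equiv> M * L ^ (m + 1) * P + (- 1) ^ (l + m) * P * L ^ m * M * L"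
  shows "adj B = - B"
proof -
  have L_M: "L * (M - Li) = M * L"
    using L_Li comm by (simp add: algebra_simps)
  have L_pow_M: "L ^ (m + 1) * (M - Li) = L ^ m * M * L"
    by (simp add: power_Suc2 mult.assoc L_M del: power_Suc)
  have "adj B = adj P * adj (L ^ (m + 1)) * adj M
      + adj L * adj M * adj (L ^ m) * adj P * (- 1) ^ (l + m)"
    unfolding B_def by (simp add: adj_add adj_mult adj_minus_one_power mult.assoc)
  also have "\<dots> = (- 1) ^ l * P * ((- 1) ^ (m + 1) * L ^ (m + 1)) * (M - Li)
      + (- L) * (M - Li) * ((- 1) ^ m * L ^ m) * ((- 1) ^ l * P) * (- 1) ^ (l + m)"
    by (simp only: adj_L adj_M adj_P adj_power_skew[OF adj_L])
  also have "\<dots> = - ((- 1) ^ (l + m) * (P * (L ^ (m + 1) * (M - Li)))) - L * (M - Li) * L ^ m * P"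
    by (simp add: minus_one_power_iff mult.assoc)
  also have "\<dots> = - ((- 1) ^ (l + m) * (P * L ^ m * M * L)) - M * L ^ (m + 1) * P"
    unfolding L_pow_M by (simp add: L_M mult.assoc)
  also have "\<dots> = - B"
    unfolding B_def by (simp add: algebra_simps)
  finally show ?thesis .
qed

lemma adj_Bh_skew:
  fixes m :: nat
  assumes adj_L: "adj L = - L" and adj_Lh: "adj Lh = - Lh" and adj_Mh: "adj Mh = Mh - Lh"
    and comm: "Lh * Mh - Mh * Lh = - Lh\<^sup>2" and adj_P: "adj P = (- 1) ^ l * P"
    and P_Lh: "P * Lh = Lh * P"
  defines "B \<equiv> L ^ m * (Lh * P) * Mh + (- 1) ^ (l + m) * Lh * Mh * P * L ^ m"
  shows "adj B = - B"
proof -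
  have Mh_Lh: "(Mh - Lh) * Lh = Lh * Mh"
    using comm by (simp add: algebra_simps power2_eq_square)
  have Lh_regroup: "(Mh - Lh) * (P * Lh) = Lh * Mh * P" "P * (Lh * Mh) = Lh * P * Mh"
    by (simp_all only: P_Lh Mh_Lh flip: mult.assoc)
  have "adj B = adj Mh * (adj P * adj Lh) * adj (L ^ m)
      + adj (L ^ m) * adj P * adj Mh * adj Lh * (- 1) ^ (l + m)"
    unfolding B_def by (simp add: adj_add adj_mult adj_minus_one_power mult.assoc)
  also have "\<dots> = (Mh - Lh) * ((- 1) ^ l * P * (- Lh)) * ((- 1) ^ m * L ^ m)
      + (- 1) ^ m * L ^ m * ((- 1) ^ l * P) * (Mh - Lh) * (- Lh) * (- 1) ^ (l + m)"
    by (simp only: adj_Lh adj_Mh adj_P adj_power_skew[OF adj_L])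
  also have "\<dots> = - ((- 1) ^ (l + m) * ((Mh - Lh) * (P * Lh) * L ^ m))
      - L ^ m * (P * ((Mh - Lh) * Lh))"
    by (simp add: minus_one_power_iff mult.assoc)
  also have "\<dots> = - ((- 1) ^ (l + m) * (Lh * Mh * P * L ^ m)) - L ^ m * (Lh * P * Mh)"
    by (simp only: Mh_Lh Lh_regroup)
  also have "\<dots> = - B"
    unfolding B_def by (simp add: algebra_simps)
  finally show ?thesis .
qed

end

lemma commutator_conjugate:
  fixes U V A B :: "'a::ring_1"
  assumes "V * U = 1"
  shows "(U * A * V) * (U * B * V) - (U * B * V) * (U * A * V) = U * (A * B - B * A) * V"
proof -
  have "U * A * V * (U * B * V) = U * (A * B) * V" "U * B * V * (U * A * V) = U * (B * A) * V"
    by (simp_all add: mult.assoc flip: mult.assoc[of V U] add: assms)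
  then show ?thesis
    by (simp add: algebra_simps)
qed

lemma conjugate_by_inverse:
  fixes D Di A :: "'a::ring_1"
  assumes "Di * D = 1"
  shows "Di * A * D = A - Di * (D * A - A * D)"
  by (simp add: algebra_simps flip: mult.assoc add: assms)

lemma commutator_inverse:
  fixes D Di A :: "'a::ring_1"
  assumes "D * Di = 1" and "Di * D = 1"
  shows "Di * A - A * Di = - (Di * (D * A - A * D) * Di)"
proof -
  have "Di * (D * A - A * D) * Di = Di * D * (A * Di) - Di * A * (D * Di)"
    by (simp add: algebra_simps)
  then show ?thesis
    by (simp add: assms)
qed

lemma LaxLh_pow_neg: "LaxLh_pow D Di Phih Phihi (- int l) = (Phih * D * Phihi) ^ l"
  by (simp add: LaxLh_pow_def)

locale bkp2 =
  fixes adj :: "'a::ring_1 \<Rightarrow> 'a" and D Di x Phi Phii Phih Phihi T Th :: 'a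
  assumes bkp2_data: "bkp2_data adj D Di x Phi Phii Phih Phihi T Th"
begin

lemma anti_involutive: "anti_involutive adj"
  and D_Di: "D * Di = 1" and Di_D: "Di * D = 1" and adj_D: "adj D = - D"
  and D_x: "D * x - x * D = 1" and adj_x: "adj x = x"
  and Phi_Phii: "Phi * Phii = 1" and Phii_Phi: "Phii * Phi = 1"
  and Phih_Phihi: "Phih * Phihi = 1" and Phihi_Phih: "Phihi * Phih = 1"
  and adj_Phi: "adj Phi = D * Phii * Di" and adj_Phih: "adj Phih = D * Phihi * Di"
  and D_T: "D * T = T * D" and adj_T: "adj T = T"
  and D_Th: "D * Th = Th * D" and adj_Th: "adj Th = Th"
  using bkp2_data unfolding bkp2_data_def anti_involutive_def by auto

lemma inverse_cancel:
  "D * (Di * a) = a" "Di * (D * a) = a" "Phi * (Phii * a) = a" "Phii * (Phi * a) = a"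
  "Phih * (Phihi * a) = a" "Phihi * (Phih * a) = a"
  by (simp_all add: D_Di Di_D Phi_Phii Phii_Phi Phih_Phihi Phihi_Phih flip: mult.assoc)

sublocale adj: anti_involutive adj
  by (rule anti_involutive)

definition tadj :: "'a \<Rightarrow> 'a" where
  "tadj A = Di * adj A * D"

sublocale tadj: anti_involutive tadj
  unfolding tadj_def by (rule adj.anti_involutive_twisted[OF D_Di Di_D adj_D])

lemma adj_eq_if_tadj_skew: "tadj A = - A \<Longrightarrow> adj A = - (D * A * Di)"
  unfolding tadj_def by (metis D_Di minus_mult_left minus_mult_right mult.assoc mult_1_left mult_1_right)

lemma tadj_D: "tadj D = - D"
  by (simp add: tadj_def adj_D mult.assoc Di_D)

lemma tadj_Phi: "tadj Phi = Phii"
  and tadj_Phih: "tadj Phih = Phihi"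
  by (simp_all add: tadj_def adj_Phi adj_Phih mult.assoc inverse_cancel Di_D)

lemma commutator_D_Gamma:
  assumes "D * S = S * D"
  shows "D * (x + S) - (x + S) * D = 1"
  using D_x assms by (simp add: algebra_simps)

lemma tadj_Gamma:
  assumes "D * S = S * D" and "adj S = S"
  shows "tadj (x + S) = x + S - Di"
  unfolding tadj_def using conjugate_by_inverse[OF Di_D, of "x + S"]
  by (simp add: adj.adj_add adj_x assms commutator_D_Gamma)

lemma tadj_LaxL: "tadj (LaxL D Phi Phii) = - LaxL D Phi Phii"
  by (simp add: LaxL_def tadj.adj_conjugate[OF tadj_Phi] tadj_D)

lemma tadj_LaxLh: "tadj (LaxLh Di Phih Phihi) = - LaxLh Di Phih Phihi"
  by (simp add: LaxLh_def tadj.adj_conjugate[OF tadj_Phih]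
      tadj.adj_right_inverse_skew[OF D_Di tadj_D])

lemma tadj_LaxLh_inverse: "tadj (Phih * D * Phihi) = - (Phih * D * Phihi)"
  by (simp add: tadj.adj_conjugate[OF tadj_Phih] tadj_D)

lemma tadj_OSM: "tadj (OSM x T Phi Phii) = OSM x T Phi Phii - Phi * Di * Phii"
  unfolding OSM_def tadj.adj_conjugate[OF tadj_Phi] tadj_Gamma[OF D_T adj_T]
  by (simp add: algebra_simps)

lemma tadj_OSMh: "tadj (OSMh x Th Phih Phihi) = OSMh x Th Phih Phihi - LaxLh Di Phih Phihi"
  unfolding OSMh_def LaxLh_def tadj.adj_conjugate[OF tadj_Phih] tadj_Gamma[OF D_Th adj_Th]
  by (simp add: algebra_simps)

lemma LaxL_right_inverse: "LaxL D Phi Phii * (Phi * Di * Phii) = 1"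
  by (simp add: LaxL_def mult.assoc inverse_cancel Phi_Phii)

lemma LaxLh_inverse:
  "LaxLh Di Phih Phihi * (Phih * D * Phihi) = 1" "(Phih * D * Phihi) * LaxLh Di Phih Phihi = 1"
  by (simp_all add: LaxLh_def mult.assoc inverse_cancel Phih_Phihi)

lemma commutator_LaxL_OSM:
  "LaxL D Phi Phii * OSM x T Phi Phii - OSM x T Phi Phii * LaxL D Phi Phii = 1"
  unfolding LaxL_def OSM_def commutator_conjugate[OF Phii_Phi] commutator_D_Gamma[OF D_T]
  by (simp add: Phi_Phii)

lemma commutator_LaxLh_OSMh:
  "LaxLh Di Phih Phihi * OSMh x Th Phih Phihi - OSMh x Th Phih Phihi * LaxLh Di Phih Phihi
     = - (LaxLh Di Phih Phihi)\<^sup>2"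
  unfolding LaxLh_def OSMh_def commutator_conjugate[OF Phihi_Phih]
    commutator_inverse[OF D_Di Di_D] commutator_D_Gamma[OF D_Th]
  by (simp add: power2_eq_square mult.assoc inverse_cancel)

lemma LaxLh_pow_one_minus:
  "LaxLh_pow D Di Phih Phihi (1 - int l) = LaxLh Di Phih Phihi * (Phih * D * Phihi) ^ l"
proof (cases l)
  case 0
  then show ?thesis by (simp add: LaxLh_pow_def LaxLh_def)
next
  case (Suc k)
  then have "LaxLh_pow D Di Phih Phihi (1 - int l) = (Phih * D * Phihi) ^ k"
    by (simp add: LaxLh_pow_def)
  also have "\<dots> = LaxLh Di Phih Phihi * (Phih * D * Phihi) ^ l"
    by (simp add: Suc LaxLh_inverse flip: mult.assoc[of "LaxLh Di Phih Phihi" "Phih * D * Phihi"])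
  finally show ?thesis .
qed

end

theorem proposition3p9:
  fixes adj :: "'a::ring_1 \<Rightarrow> 'a"
    and D Di x Phi Phii Phih Phihi T Th :: 'a
    and m l :: nat
  assumes "bkp2_data adj D Di x Phi Phii Phih Phihi T Th"
  defines "L \<equiv> LaxL D Phi Phii"
    and "Lh \<equiv> LaxLh Di Phih Phihi"
    and "Lhp \<equiv> LaxLh_pow D Di Phih Phihi"
    and "M \<equiv> OSM x T Phi Phii"
    and "Mh \<equiv> OSMh x Th Phih Phihi"
  defines "B \<equiv> M * L ^ (m + 1) * Lhp (- int l)
               + (- 1) ^ (l + m) * Lhp (- int l) * L ^ m * M * L"
    and "Bh \<equiv> L ^ m * Lhp (1 - int l) * Mh
               + (- 1) ^ (l + m) * Lh * Mh * Lhp (- int l) * L ^ m"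
  shows "adj B = - (D * B * Di) \<and> adj Bh = - (D * Bh * Di)"
proof -
  interpret bkp2 adj D Di x Phi Phii Phih Phihi T Th
    by (rule bkp2.intro) fact
  define P where "P = (Phih * D * Phihi) ^ l"
  have tadj_P: "tadj P = (- 1) ^ l * P"
    unfolding P_def by (rule tadj.adj_power_skew[OF tadj_LaxLh_inverse])
  have P_Lh: "P * LaxLh Di Phih Phihi = LaxLh Di Phih Phihi * P"
    unfolding P_def by (rule power_commuting_commutes) (simp add: LaxLh_inverse)
  have "tadj B = - B"
    unfolding B_def Lhp_def LaxLh_pow_neg P_def[symmetric] L_def M_def
    by (rule tadj.adj_B_skew[OF tadj_LaxL tadj_OSM LaxL_right_inverse commutator_LaxL_OSM tadj_P])
  moreover have "tadj Bh = - Bh"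
    unfolding Bh_def Lhp_def LaxLh_pow_neg LaxLh_pow_one_minus P_def[symmetric] L_def Lh_def Mh_def
    by (rule tadj.adj_Bh_skew[OF tadj_LaxL tadj_LaxLh tadj_OSMh commutator_LaxLh_OSMh tadj_P P_Lh])
  ultimately show ?thesis
    by (simp add: adj_eq_if_tadj_skew)
qed

end
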